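(* Let $G=(V,E)$ be a connected finite undirected graph without loops, with vertex set $V=\{1,\dots,n\}$, $n\ge 2$. Let $D$ be a self-adjoint $n\times n$ complex matrix compatible with $G$, i.e. $D_{ij}=D_{ji}=0$ whenever $i\neq j$ and $\{i,j\}\notin E$. For $v\in V$ let $\Delta(v)$ be the degree of $v$ in $G$ (the number of edges of $G$ incident to $v$), let $\Delta=\mathrm{diag}(\Delta(1),\dots,\Delta(n))$, let $\Delta(G)=\max\{\Delta(i)\mid i=1,\dots,n\}$, and let $D_\Delta=\Delta^{-1/2}D\Delta^{-1/2}$. Then for all $i,j\in V$, $$\ell^D(i,j)\le d^{D_\Delta}(i,j)\le \Delta(G)\,d^D(i,j).$$
   Context: For a self-adjoint $n\times n$ matrix $M$, the noncommutative distance is $d^M(i,j)=\sup\{|a(i)-a(j)| : a\in\mathbb{C}^n,\ \|[M,\pi(a)]\|\le 1\}\in[0,+\infty]$, where $\pi(a)=\mathrm{diag}(a(1),\dots,a(n))$ and $\|\cdot\|$ is the operator norm. The weight of an edge $\{i,j\}\in E$ is $w^D(i,j)=|D_{ij}|^{-1}\in(0,+\infty]$. The length of a path in $G$ is the sum of the weights of its edges, and $\ell^D(i,j)$ (the geodesic distance) is the infimum of the lengths of all paths in $G$ from $i$ to $j$. *)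

theory Defs
  imports "HOL-Analysis.Analysis"
begin

text \<open>Vectors in C^n are functions nat => complex (only indices 1..n matter);
  n x n matrices are functions nat => nat => complex (only indices in 1..n matter).\<close>

definition vnorm :: "nat \<Rightarrow> (nat \<Rightarrow> complex) \<Rightarrow> real" where
  "vnorm n x = sqrt (\<Sum>i\<in>{1..n}. (cmod (x i))\<^sup>2)"

definition mvec :: "nat \<Rightarrow> (nat \<Rightarrow> nat \<Rightarrow> complex) \<Rightarrow> (nat \<Rightarrow> complex) \<Rightarrow> (nat \<Rightarrow> complex)" where
  "mvec n A x = (\<lambda>i. \<Sum>j\<in>{1..n}. A i j * x j)"

definition opnorm :: "nat \<Rightarrow> (nat \<Rightarrow> nat \<Rightarrow> complex) \<Rightarrow> real" where
  "opnorm n A = Sup {vnorm n (mvec n A x) | x. vnorm n x \<le> 1}"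

definition diagm :: "(nat \<Rightarrow> complex) \<Rightarrow> (nat \<Rightarrow> nat \<Rightarrow> complex)" where
  "diagm a = (\<lambda>i j. if i = j then a i else 0)"

definition mmult :: "nat \<Rightarrow> (nat \<Rightarrow> nat \<Rightarrow> complex) \<Rightarrow> (nat \<Rightarrow> nat \<Rightarrow> complex) \<Rightarrow> (nat \<Rightarrow> nat \<Rightarrow> complex)" where
  "mmult n A B = (\<lambda>i k. \<Sum>j\<in>{1..n}. A i j * B j k)"

definition commutator :: "nat \<Rightarrow> (nat \<Rightarrow> nat \<Rightarrow> complex) \<Rightarrow> (nat \<Rightarrow> nat \<Rightarrow> complex) \<Rightarrow> (nat \<Rightarrow> nat \<Rightarrow> complex)" where
  "commutator n A B = (\<lambda>i k. mmult n A B i k - mmult n B A i k)"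

definition nc_dist :: "nat \<Rightarrow> (nat \<Rightarrow> nat \<Rightarrow> complex) \<Rightarrow> nat \<Rightarrow> nat \<Rightarrow> ereal" where
  "nc_dist n M i j = (SUP a\<in>{a. opnorm n (commutator n M (diagm a)) \<le> 1}. ereal (cmod (a i - a j)))"

definition weight :: "(nat \<Rightarrow> nat \<Rightarrow> complex) \<Rightarrow> nat \<Rightarrow> nat \<Rightarrow> ereal" where
  "weight D i j = (if D i j = 0 then \<infinity> else ereal (1 / cmod (D i j)))"

definition is_path :: "nat set set \<Rightarrow> nat \<Rightarrow> nat \<Rightarrow> nat list \<Rightarrow> bool" where
  "is_path E i j p \<longleftrightarrow> p \<noteq> [] \<and> hd p = i \<and> last p = j \<and>
     (\<forall>k. Suc k < length p \<longrightarrow> {p ! k, p ! Suc k} \<in> E)"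

definition path_length :: "(nat \<Rightarrow> nat \<Rightarrow> complex) \<Rightarrow> nat list \<Rightarrow> ereal" where
  "path_length D p = (\<Sum>k\<leftarrow>[0..<length p - 1]. weight D (p ! k) (p ! Suc k))"

definition geod_dist :: "nat set set \<Rightarrow> (nat \<Rightarrow> nat \<Rightarrow> complex) \<Rightarrow> nat \<Rightarrow> nat \<Rightarrow> ereal" where
  "geod_dist E D i j = (INF p\<in>{p. is_path E i j p}. path_length D p)"

definition simple_graph :: "nat \<Rightarrow> nat set set \<Rightarrow> bool" where
  "simple_graph n E \<longleftrightarrow> (\<forall>e\<in>E. \<exists>u v. u \<noteq> v \<and> u \<in> {1..n} \<and> v \<in> {1..n} \<and> e = {u, v})"

definition connected_graph :: "nat \<Rightarrow> nat set set \<Rightarrow> bool" where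
  "connected_graph n E \<longleftrightarrow> (\<forall>i\<in>{1..n}. \<forall>j\<in>{1..n}. \<exists>p. is_path E i j p)"

definition degree :: "nat set set \<Rightarrow> nat \<Rightarrow> nat" where
  "degree E v = card {e\<in>E. v \<in> e}"

definition max_degree :: "nat \<Rightarrow> nat set set \<Rightarrow> nat" where
  "max_degree n E = Max (degree E ` {1..n})"

definition deg_normalize :: "nat set set \<Rightarrow> (nat \<Rightarrow> nat \<Rightarrow> complex) \<Rightarrow> (nat \<Rightarrow> nat \<Rightarrow> complex)" where
  "deg_normalize E D = (\<lambda>i j. complex_of_real (1 / sqrt (real (degree E i))) * D i j
                              * complex_of_real (1 / sqrt (real (degree E j))))"

end

theory Submission
  imports Defs
begin

(* Lower bound: the geodesic distance from i, truncated at a height t, is 1/|D_kl|-Lipschitz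
   along every edge {k,l}, so the entries of [D_Delta, pi(a)] are at most A_kl / sqrt(Delta(k) Delta(l))
   in modulus, with A the adjacency matrix of G. Since A has row and column sums Delta(k), the Schur
   test bounds the norm of such a matrix by 1; hence a is admissible for d^{D_Delta}, and letting
   t go to infinity gives l^D(i,j) <= d^{D_Delta}(i,j).
   Upper bound: [D, pi(a)] = Delta^{1/2} [D_Delta, pi(a)] Delta^{1/2} and every Delta(k) is at most
   Delta(G), so a / Delta(G) is admissible for d^D whenever a is admissible for d^{D_Delta}. *)

lemma vnorm_eq_L2_set: "vnorm n x = L2_set (\<lambda>k. cmod (x k)) {1..n}"
  unfolding vnorm_def L2_set_def by simp

lemma vnorm_nonneg: "0 \<le> vnorm n x"
  unfolding vnorm_eq_L2_set by simp

lemma vnorm_cong: "(\<And>k. k \<in> {1..n} \<Longrightarrow> x k = y k) \<Longrightarrow> vnorm n x = vnorm n y"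
  unfolding vnorm_def by simp

lemma vnorm_mult: "vnorm n (\<lambda>k. r * x k) = cmod r * vnorm n x"
  unfolding vnorm_eq_L2_set by (simp add: L2_set_right_distrib norm_mult)

lemma vnorm_le_pointwise:
  assumes "0 \<le> c" and "\<And>k. k \<in> {1..n} \<Longrightarrow> cmod (y k) \<le> c * cmod (x k)"
  shows "vnorm n y \<le> c * vnorm n x"
proof -
  have "vnorm n y \<le> L2_set (\<lambda>k. c * cmod (x k)) {1..n}"
    unfolding vnorm_eq_L2_set by (rule L2_set_mono) (use assms in auto)
  then show ?thesis
    by (simp add: vnorm_eq_L2_set L2_set_right_distrib[OF assms(1)])
qed

lemma vnorm_mvec_le_entrywise:
  "vnorm n (mvec n A x) \<le> (\<Sum>k\<in>{1..n}. \<Sum>l\<in>{1..n}. cmod (A k l)) * vnorm n x"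
proof -
  have entry: "cmod (x l) \<le> vnorm n x" if "l \<in> {1..n}" for l
    unfolding vnorm_eq_L2_set by (rule member_le_L2_set) (use that in auto)
  have "cmod (mvec n A x k) \<le> (\<Sum>l\<in>{1..n}. cmod (A k l)) * vnorm n x" for k
  proof -
    have "cmod (mvec n A x k) \<le> (\<Sum>l\<in>{1..n}. cmod (A k l) * cmod (x l))"
      unfolding mvec_def by (rule norm_sum [THEN order_trans]) (simp add: norm_mult)
    also have "\<dots> \<le> (\<Sum>l\<in>{1..n}. cmod (A k l) * vnorm n x)"
      by (intro sum_mono mult_left_mono entry) auto
    finally show ?thesis by (simp add: sum_distrib_right)
  qed
  then have "vnorm n (mvec n A x) \<le> (\<Sum>k\<in>{1..n}. (\<Sum>l\<in>{1..n}. cmod (A k l)) * vnorm n x)"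
    unfolding vnorm_eq_L2_set by (intro L2_set_le_sum [THEN order_trans] sum_mono) auto
  then show ?thesis by (simp add: sum_distrib_right)
qed

lemma bdd_above_opnorm: "bdd_above {vnorm n (mvec n A x) | x. vnorm n x \<le> 1}"
proof (rule bdd_aboveI)
  fix r assume "r \<in> {vnorm n (mvec n A x) | x. vnorm n x \<le> 1}"
  then obtain x where "r = vnorm n (mvec n A x)" "vnorm n x \<le> 1" by auto
  then show "r \<le> (\<Sum>k\<in>{1..n}. \<Sum>l\<in>{1..n}. cmod (A k l))"
    using vnorm_mvec_le_entrywise[of n A x]
    by (smt (verit) mult_left_le sum_nonneg norm_ge_zero)
qed

lemma opnorm_upper: "vnorm n x \<le> 1 \<Longrightarrow> vnorm n (mvec n A x) \<le> opnorm n A"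
  unfolding opnorm_def by (rule cSup_upper) (use bdd_above_opnorm in auto)

lemma opnorm_least:
  assumes "\<And>x. vnorm n x \<le> 1 \<Longrightarrow> vnorm n (mvec n A x) \<le> c"
  shows "opnorm n A \<le> c"
  unfolding opnorm_def
proof (rule cSup_least)
  show "{vnorm n (mvec n A x) | x. vnorm n x \<le> 1} \<noteq> {}"
    by (auto intro!: exI[of _ "\<lambda>_. 0"] simp: vnorm_def)
qed (use assms in auto)

lemma opnorm_nonneg: "0 \<le> opnorm n A"
proof -
  have "vnorm n (\<lambda>_. 0) \<le> 1" by (simp add: vnorm_def)
  from opnorm_upper[OF this] show ?thesis by (rule order_trans[OF vnorm_nonneg])
qed

lemma vnorm_mvec_le_opnorm: "vnorm n (mvec n A x) \<le> opnorm n A * vnorm n x"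
proof (cases "vnorm n x = 0")
  case True
  then have "vnorm n (mvec n A x) = vnorm n (\<lambda>_. 0)"
    by (intro vnorm_cong) (auto simp: mvec_def vnorm_eq_L2_set L2_set_eq_0_iff)
  then show ?thesis using True by (simp add: vnorm_def)
next
  case False
  define c where "c = vnorm n x"
  have "c > 0" using False vnorm_nonneg[of n x] c_def by simp
  define y where "y = (\<lambda>k. of_real (1/c) * x k)"
  have "vnorm n y = 1"
    unfolding y_def vnorm_mult using \<open>c > 0\<close> c_def by (simp add: norm_divide)
  have mvec_y: "mvec n A y = (\<lambda>k. of_real (1/c) * mvec n A x k)"
    unfolding y_def mvec_def by (auto simp: sum_distrib_left ac_simps)
  have "(1/c) * vnorm n (mvec n A x) = vnorm n (mvec n A y)"
    unfolding mvec_y vnorm_mult using \<open>c > 0\<close> by (simp add: norm_divide)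
  also have "\<dots> \<le> opnorm n A"
    using \<open>vnorm n y = 1\<close> by (simp add: opnorm_upper)
  finally show ?thesis using \<open>c > 0\<close> c_def by (simp add: field_simps)
qed

lemma opnorm_cong:
  assumes "\<And>k l. k \<in> {1..n} \<Longrightarrow> l \<in> {1..n} \<Longrightarrow> A k l = B k l"
  shows "opnorm n A = opnorm n B"
proof -
  have "vnorm n (mvec n A x) = vnorm n (mvec n B x)" for x
    by (rule vnorm_cong) (simp add: mvec_def assms)
  then show ?thesis unfolding opnorm_def by simp
qed

lemma commutator_diagm:
  assumes "k \<in> {1..n}" and "l \<in> {1..n}"
  shows "commutator n M (diagm a) k l = M k l * (a l - a k)"
proof -
  have "mmult n M (diagm a) k l = M k l * a l"
    unfolding mmult_def diagm_def using assms(2)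
    by (simp add: if_distrib[where f="\<lambda>z. M k _ * z"] sum.delta cong: if_cong)
  moreover have "mmult n (diagm a) M k l = a k * M k l"
    unfolding mmult_def diagm_def using assms(1)
    by (simp add: if_distrib[where f="\<lambda>z. z * M _ l"] sum.delta cong: if_cong)
  ultimately show ?thesis by (simp add: commutator_def algebra_simps)
qed

lemma Schur_test_row:
  fixes C :: "nat \<Rightarrow> nat \<Rightarrow> complex" and e :: "nat \<Rightarrow> nat \<Rightarrow> real" and d :: "nat \<Rightarrow> real"
  assumes e_nonneg: "\<And>l. l \<in> {1..n} \<Longrightarrow> 0 \<le> e k l"
    and d_pos: "\<And>l. l \<in> {1..n} \<Longrightarrow> 0 < d l" and "0 < d k"
    and row_sum: "(\<Sum>l\<in>{1..n}. e k l) \<le> d k"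
    and entry: "\<And>l. l \<in> {1..n} \<Longrightarrow> cmod (C k l) \<le> e k l / sqrt (d k * d l)"
  shows "(cmod (mvec n C x k))\<^sup>2 \<le> (\<Sum>l\<in>{1..n}. e k l * (cmod (x l))\<^sup>2 / d l)"
proof -
  let ?u = "\<lambda>l. sqrt (e k l / d k)" and ?v = "\<lambda>l. sqrt (e k l / d l) * cmod (x l)"
  have "cmod (C k l * x l) \<le> ?u l * ?v l" if l: "l \<in> {1..n}" for l
  proof -
    have "cmod (C k l * x l) \<le> e k l / sqrt (d k * d l) * cmod (x l)"
      unfolding norm_mult by (rule mult_right_mono[OF entry[OF l] norm_ge_zero])
    also have "e k l / sqrt (d k * d l) = sqrt ((e k l)\<^sup>2 / (d k * d l))"
      using e_nonneg[OF l] by (simp add: real_sqrt_divide)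
    also have "\<dots> * cmod (x l) = ?u l * ?v l"
      by (simp add: real_sqrt_mult[symmetric] power2_eq_square)
    finally show ?thesis .
  qed
  then have "cmod (mvec n C x k) \<le> (\<Sum>l\<in>{1..n}. ?u l * ?v l)"
    unfolding mvec_def by (intro norm_sum [THEN order_trans] sum_mono)
  then have "(cmod (mvec n C x k))\<^sup>2 \<le> (\<Sum>l\<in>{1..n}. ?u l * ?v l)\<^sup>2"
    by (simp add: power_mono)
  also have "\<dots> \<le> (\<Sum>l\<in>{1..n}. (?u l)\<^sup>2) * (\<Sum>l\<in>{1..n}. (?v l)\<^sup>2)"
    by (rule Cauchy_Schwarz_ineq_sum)
  also have "(\<Sum>l\<in>{1..n}. (?u l)\<^sup>2) = (\<Sum>l\<in>{1..n}. e k l) / d k"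
    using e_nonneg \<open>0 < d k\<close> by (simp add: sum_divide_distrib)
  also have "(\<Sum>l\<in>{1..n}. (?v l)\<^sup>2) = (\<Sum>l\<in>{1..n}. e k l * (cmod (x l))\<^sup>2 / d l)"
    using e_nonneg d_pos by (intro sum.cong) (simp_all add: power_mult_distrib less_imp_le)
  also have "(\<Sum>l\<in>{1..n}. e k l) / d k * \<dots> \<le> \<dots>"
  proof (rule mult_left_le_one_le)
    show "0 \<le> (\<Sum>l\<in>{1..n}. e k l * (cmod (x l))\<^sup>2 / d l)"
      using e_nonneg d_pos by (intro sum_nonneg) (simp add: less_imp_le)
    show "0 \<le> (\<Sum>l\<in>{1..n}. e k l) / d k"
      using e_nonneg \<open>0 < d k\<close> by (intro divide_nonneg_pos sum_nonneg) auto
    show "(\<Sum>l\<in>{1..n}. e k l) / d k \<le> 1"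
      using row_sum \<open>0 < d k\<close> by simp
  qed
  finally show ?thesis .
qed

lemma Schur_test:
  fixes C :: "nat \<Rightarrow> nat \<Rightarrow> complex" and e :: "nat \<Rightarrow> nat \<Rightarrow> real" and d :: "nat \<Rightarrow> real"
  assumes e_nonneg: "\<And>k l. k \<in> {1..n} \<Longrightarrow> l \<in> {1..n} \<Longrightarrow> 0 \<le> e k l"
    and d_pos: "\<And>k. k \<in> {1..n} \<Longrightarrow> 0 < d k"
    and row_sum: "\<And>k. k \<in> {1..n} \<Longrightarrow> (\<Sum>l\<in>{1..n}. e k l) \<le> d k"
    and col_sum: "\<And>l. l \<in> {1..n} \<Longrightarrow> (\<Sum>k\<in>{1..n}. e k l) \<le> d l"
    and entry: "\<And>k l. k \<in> {1..n} \<Longrightarrow> l \<in> {1..n} \<Longrightarrow> cmod (C k l) \<le> e k l / sqrt (d k * d l)"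
  shows "opnorm n C \<le> 1"
proof (rule opnorm_least)
  fix x assume "vnorm n x \<le> 1"
  have "(\<Sum>k\<in>{1..n}. (cmod (mvec n C x k))\<^sup>2)
      \<le> (\<Sum>k\<in>{1..n}. \<Sum>l\<in>{1..n}. e k l * (cmod (x l))\<^sup>2 / d l)"
    using assms by (intro sum_mono Schur_test_row) auto
  also have "\<dots> = (\<Sum>l\<in>{1..n}. (\<Sum>k\<in>{1..n}. e k l) / d l * (cmod (x l))\<^sup>2)"
    by (subst sum.swap) (simp add: sum_distrib_right sum_divide_distrib)
  also have "\<dots> \<le> (\<Sum>l\<in>{1..n}. (cmod (x l))\<^sup>2)"
    using col_sum d_pos e_nonneg
    by (intro sum_mono mult_left_le_one_le divide_nonneg_pos sum_nonneg) auto
  finally show "vnorm n (mvec n C x) \<le> 1"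
    using \<open>vnorm n x \<le> 1\<close> unfolding vnorm_def by (meson order_trans real_sqrt_le_mono)
qed

lemma simple_graph_finite_edges: "simple_graph n E \<Longrightarrow> finite E"
  unfolding simple_graph_def by (rule finite_subset[of _ "Pow {1..n}"]) auto

lemma card_neighbours_eq_degree:
  assumes "simple_graph n E" and "l \<in> {1..n}"
  shows "card {k\<in>{1..n}. {k, l} \<in> E} = degree E l"
proof -
  have "bij_betw (\<lambda>k. {k, l}) {k\<in>{1..n}. {k, l} \<in> E} {e\<in>E. l \<in> e}"
  proof (rule bij_betwI')
    fix x y assume "x \<in> {k\<in>{1..n}. {k, l} \<in> E}" "y \<in> {k\<in>{1..n}. {k, l} \<in> E}"
    moreover from this have "x \<noteq> l"
      using assms(1) unfolding simple_graph_def by (auto simp: doubleton_eq_iff)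
    ultimately show "({x, l} = {y, l}) = (x = y)" by (auto simp: doubleton_eq_iff)
  next
    fix e assume e: "e \<in> {e\<in>E. l \<in> e}"
    then obtain u v where "u \<in> {1..n}" "v \<in> {1..n}" "e = {u, v}"
      using assms(1) unfolding simple_graph_def by blast
    with e show "\<exists>x\<in>{k\<in>{1..n}. {k, l} \<in> E}. e = {x, l}" by (auto simp: insert_commute)
  qed auto
  then show ?thesis unfolding degree_def by (rule bij_betw_same_card)
qed

lemma degree_pos:
  assumes "n \<ge> 2" and "simple_graph n E" and "connected_graph n E" and "l \<in> {1..n}"
  shows "0 < degree E l"
proof -
  define j where "j = (if l = 1 then 2 else 1 :: nat)"
  have j: "j \<in> {1..n}" "j \<noteq> l" using assms(1,4) by (auto simp: j_def)
  then obtain p where p: "is_path E l j p"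
    using assms(3,4) unfolding connected_graph_def by blast
  have "Suc 0 < length p"
  proof (rule ccontr)
    assume "\<not> Suc 0 < length p"
    then obtain a where "p = [a]" using p unfolding is_path_def by (cases p) auto
    then show False using p j(2) unfolding is_path_def by simp
  qed
  then have "{l, p ! 1} \<in> {e\<in>E. l \<in> e}"
    using p unfolding is_path_def by (auto simp: hd_conv_nth)
  moreover have "finite {e\<in>E. l \<in> e}"
    using simple_graph_finite_edges[OF assms(2)] by simp
  ultimately show ?thesis unfolding degree_def by (auto simp: card_gt_0_iff)
qed

lemma weight_nonneg: "0 \<le> weight D k l"
  unfolding weight_def by auto

lemma path_length_nonneg: "0 \<le> path_length D p"
  unfolding path_length_def by (rule sum_list_nonneg) (auto simp: weight_nonneg)

lemma path_length_snoc:
  assumes "p \<noteq> []"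
  shows "path_length D (p @ [l]) = path_length D p + weight D (last p) l"
proof -
  obtain m where m: "length p = Suc m" using assms by (cases p) auto
  have "(\<Sum>k\<leftarrow>[0..<m]. weight D ((p @ [l]) ! k) ((p @ [l]) ! Suc k))
      = (\<Sum>k\<leftarrow>[0..<m]. weight D (p ! k) (p ! Suc k))"
    by (rule arg_cong[where f=sum_list], rule map_cong) (auto simp: m nth_append)
  moreover have "(p @ [l]) ! m = last p" "(p @ [l]) ! Suc m = l"
    using m assms by (simp_all add: nth_append last_conv_nth)
  ultimately show ?thesis unfolding path_length_def using m by simp
qed

lemma is_path_snoc:
  assumes "is_path E i k p" and "{k, l} \<in> E"
  shows "is_path E i l (p @ [l])"
  unfolding is_path_def
proof (intro conjI allI impI)
  show "hd (p @ [l]) = i" using assms(1) unfolding is_path_def by simp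
  fix m assume m: "Suc m < length (p @ [l])"
  show "{(p @ [l]) ! m, (p @ [l]) ! Suc m} \<in> E"
  proof (cases "Suc m < length p")
    case True
    then show ?thesis using assms(1) unfolding is_path_def by (auto simp: nth_append)
  next
    case False
    then have "m = length p - 1" "p \<noteq> []" using m assms(1) unfolding is_path_def by auto
    then show ?thesis using assms unfolding is_path_def by (auto simp: nth_append last_conv_nth)
  qed
qed simp_all

lemma geod_dist_nonneg: "0 \<le> geod_dist E D i k"
  unfolding geod_dist_def by (rule INF_greatest) (rule path_length_nonneg)

lemma geod_dist_self: "geod_dist E D i i = 0"
proof -
  have "geod_dist E D i i \<le> path_length D [i]"
    unfolding geod_dist_def by (rule INF_lower) (simp add: is_path_def)
  then show ?thesis using geod_dist_nonneg[of E D i i] by (simp add: path_length_def)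
qed

lemma geod_dist_edge_le:
  assumes "{k, l} \<in> E"
  shows "geod_dist E D i l \<le> geod_dist E D i k + weight D k l"
proof (cases "{p. is_path E i k p} = {}")
  case True
  then have "geod_dist E D i k = \<infinity>" by (simp add: geod_dist_def top_ereal_def[symmetric])
  then show ?thesis using weight_nonneg[of D k l] by simp
next
  case False
  have "geod_dist E D i l \<le> (INF p\<in>{p. is_path E i k p}. path_length D p + weight D k l)"
  proof (rule INF_greatest)
    fix p assume "p \<in> {p. is_path E i k p}"
    then have p: "is_path E i k p" by simp
    have "geod_dist E D i l \<le> path_length D (p @ [l])"
      unfolding geod_dist_def by (rule INF_lower) (simp add: is_path_snoc[OF p assms])
    also have "\<dots> = path_length D p + weight D k l"
      using p path_length_snoc[of p D l] unfolding is_path_def by auto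
    finally show "geod_dist E D i l \<le> path_length D p + weight D k l" .
  qed
  also have "\<dots> = geod_dist E D i k + weight D k l"
    unfolding geod_dist_def
    by (rule INF_ereal_add_left) (use False weight_nonneg path_length_nonneg in auto)
  finally show ?thesis .
qed

section \<open>Lower bound by the geodesic distance\<close>

lemma nc_dist_lower_bound:
  "opnorm n (commutator n M (diagm a)) \<le> 1 \<Longrightarrow> ereal (cmod (a i - a j)) \<le> nc_dist n M i j"
  unfolding nc_dist_def by (rule SUP_upper) simp

lemma lipschitz_le_nc_dist_deg_normalize:
  fixes g :: "nat \<Rightarrow> real"
  assumes "simple_graph n E" and deg_pos: "\<forall>k\<in>{1..n}. 0 < degree E k"
    and off_edges: "\<forall>k\<in>{1..n}. \<forall>l\<in>{1..n}. k \<noteq> l \<and> {k, l} \<notin> E \<longrightarrow> D k l = 0"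
    and lip: "\<And>k l. k \<in> {1..n} \<Longrightarrow> l \<in> {1..n} \<Longrightarrow> {k, l} \<in> E \<Longrightarrow> \<bar>g l - g k\<bar> * cmod (D k l) \<le> 1"
  shows "ereal \<bar>g i - g j\<bar> \<le> nc_dist n (deg_normalize E D) i j"
proof -
  define d where "d k = real (degree E k)" for k
  define e :: "nat \<Rightarrow> nat \<Rightarrow> real" where "e k l = of_bool ({k, l} \<in> E)" for k l
  have sums: "(\<Sum>k\<in>{1..n}. e k l) = d l" "(\<Sum>k\<in>{1..n}. e l k) = d l" if "l \<in> {1..n}" for l
    using card_neighbours_eq_degree[OF assms(1) that]
    by (simp_all add: e_def d_def Int_def insert_commute)
  have entry: "cmod (deg_normalize E D k l * (of_real (g l) - of_real (g k))) \<le> e k l / sqrt (d k * d l)"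
    if k: "k \<in> {1..n}" and l: "l \<in> {1..n}" for k l
  proof -
    have "cmod (deg_normalize E D k l * (of_real (g l) - of_real (g k)))
        = \<bar>g l - g k\<bar> * cmod (D k l) / sqrt (d k * d l)"
      using deg_pos k l
      by (simp add: deg_normalize_def d_def norm_mult real_sqrt_mult norm_divide
          flip: of_real_diff)
    also have "\<dots> \<le> e k l / sqrt (d k * d l)"
      using lip[OF k l] off_edges k l by (cases "k = l") (auto simp: e_def d_def divide_right_mono)
    finally show ?thesis .
  qed
  have "opnorm n (\<lambda>k l. deg_normalize E D k l * (of_real (g l) - of_real (g k))) \<le> 1"
  proof (rule Schur_test[where e = e and d = d])
    show "0 \<le> e k l" "0 < d k" if "k \<in> {1..n}" for k l
      using deg_pos that by (simp_all add: e_def d_def)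
  qed (use sums entry in auto)
  then have "opnorm n (commutator n (deg_normalize E D) (diagm (\<lambda>k. of_real (g k)))) \<le> 1"
    by (subst opnorm_cong[OF commutator_diagm])
  from nc_dist_lower_bound[OF this] show ?thesis by (simp flip: of_real_diff)
qed

lemma ereal_le_if_truncations_le:
  fixes A B :: ereal
  assumes "\<And>t. 0 \<le> t \<Longrightarrow> min A (ereal t) \<le> B"
  shows "A \<le> B"
proof (rule ereal_le_real)
  fix z assume "B \<le> ereal z"
  then have "min A (ereal (max (z + 1) 0)) \<le> ereal z"
    using assms[of "max (z + 1) 0"] by simp
  then show "A \<le> ereal z" by (cases A) (auto simp: min_def split: if_splits)
qed

(* The geodesic distance is infinite between vertices that are not joined by edges with
   D_kl <> 0, so it is truncated at height t to obtain a real test function. *)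
definition trunc_geod :: "nat set set \<Rightarrow> (nat \<Rightarrow> nat \<Rightarrow> complex) \<Rightarrow> real \<Rightarrow> nat \<Rightarrow> nat \<Rightarrow> real" where
  "trunc_geod E D t i k = real_of_ereal (min (geod_dist E D i k) (ereal t))"

lemma ereal_trunc_geod:
  "0 \<le> t \<Longrightarrow> ereal (trunc_geod E D t i k) = min (geod_dist E D i k) (ereal t)"
  unfolding trunc_geod_def using geod_dist_nonneg[of E D i k]
  by (cases "geod_dist E D i k") (auto simp: min_def)

lemma trunc_geod_edge_le:
  assumes "{k, l} \<in> E" and "D k l \<noteq> 0" and "0 \<le> t"
  shows "trunc_geod E D t i l \<le> trunc_geod E D t i k + 1 / cmod (D k l)"
proof -
  define w where "w = 1 / cmod (D k l)"
  have "0 \<le> w" by (simp add: w_def)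
  have "ereal (trunc_geod E D t i l) \<le> min (geod_dist E D i k + ereal w) (ereal t)"
    using geod_dist_edge_le[OF assms(1), of D i] assms(2,3)
    by (simp add: ereal_trunc_geod weight_def w_def min.coboundedI1)
  also have "\<dots> \<le> min (geod_dist E D i k) (ereal t) + ereal w"
    using \<open>0 \<le> w\<close> by (cases "geod_dist E D i k") (auto simp: min_def)
  also have "\<dots> = ereal (trunc_geod E D t i k) + ereal w"
    using assms(3) by (simp add: ereal_trunc_geod)
  finally show ?thesis by (simp add: w_def)
qed

lemma trunc_geod_lipschitz:
  assumes "{k, l} \<in> E" and "cmod (D l k) = cmod (D k l)" and "0 \<le> t"
  shows "\<bar>trunc_geod E D t i l - trunc_geod E D t i k\<bar> * cmod (D k l) \<le> 1"
proof (cases "D k l = 0")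
  case False
  have "{l, k} \<in> E" using assms(1) by (simp add: insert_commute)
  then have "\<bar>trunc_geod E D t i l - trunc_geod E D t i k\<bar> \<le> 1 / cmod (D k l)"
    using trunc_geod_edge_le[of k l E D t i] trunc_geod_edge_le[of l k E D t i]
      assms False by fastforce
  then show ?thesis using False by (simp add: field_simps)
qed simp

lemma geod_dist_le_nc_dist_deg_normalize:
  assumes "simple_graph n E" and "\<forall>k\<in>{1..n}. 0 < degree E k"
    and hermitian: "\<forall>k\<in>{1..n}. \<forall>l\<in>{1..n}. D l k = cnj (D k l)"
    and "\<forall>k\<in>{1..n}. \<forall>l\<in>{1..n}. k \<noteq> l \<and> {k, l} \<notin> E \<longrightarrow> D k l = 0"
  shows "geod_dist E D i j \<le> nc_dist n (deg_normalize E D) i j"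
proof (rule ereal_le_if_truncations_le)
  fix t :: real assume "0 \<le> t"
  have "ereal \<bar>trunc_geod E D t i i - trunc_geod E D t i j\<bar> \<le> nc_dist n (deg_normalize E D) i j"
  proof (rule lipschitz_le_nc_dist_deg_normalize[where g = "trunc_geod E D t i", OF assms(1,2,4)])
    fix k l assume k: "k \<in> {1..n}" and l: "l \<in> {1..n}" and "{k, l} \<in> E"
    moreover have "cmod (D l k) = cmod (D k l)" by (simp add: hermitian[rule_format, OF k l])
    ultimately show "\<bar>trunc_geod E D t i l - trunc_geod E D t i k\<bar> * cmod (D k l) \<le> 1"
      using \<open>0 \<le> t\<close> by (intro trunc_geod_lipschitz)
  qed
  moreover have "trunc_geod E D t i i = 0"
    using \<open>0 \<le> t\<close> by (simp add: trunc_geod_def geod_dist_self min_def)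
  moreover have "0 \<le> ereal (trunc_geod E D t i j)"
    unfolding ereal_trunc_geod[OF \<open>0 \<le> t\<close>] using geod_dist_nonneg[of E D i j] \<open>0 \<le> t\<close>
    by simp
  ultimately have "ereal (trunc_geod E D t i j) \<le> nc_dist n (deg_normalize E D) i j"
    by simp
  then show "min (geod_dist E D i j) (ereal t) \<le> nc_dist n (deg_normalize E D) i j"
    by (simp only: ereal_trunc_geod[OF \<open>0 \<le> t\<close>])
qed

section \<open>Upper bound by the maximal degree\<close>

lemma mvec_commutator_eq_deg_normalize:
  assumes "0 < M" and "\<forall>k\<in>{1..n}. 0 < degree E k" and "k \<in> {1..n}"
  shows "mvec n (commutator n D (diagm (\<lambda>k. a k / of_real M))) x k
    = of_real (sqrt (degree E k) / M)
      * mvec n (commutator n (deg_normalize E D) (diagm a)) (\<lambda>l. of_real (sqrt (degree E l)) * x l) k"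
  unfolding mvec_def sum_distrib_left
proof (rule sum.cong)
  fix l assume l: "l \<in> {1..n}"
  have "sqrt (degree E k) \<noteq> 0" "sqrt (degree E l) \<noteq> 0" using assms(2,3) l by simp_all
  with \<open>0 < M\<close> show "commutator n D (diagm (\<lambda>k. a k / of_real M)) k l * x l
      = of_real (sqrt (degree E k) / M)
        * (commutator n (deg_normalize E D) (diagm a) k l * (of_real (sqrt (degree E l)) * x l))"
    unfolding commutator_diagm[OF assms(3) l] deg_normalize_def by (simp add: field_simps)
qed simp

lemma opnorm_commutator_le_deg_normalize:
  assumes "0 < M" and deg: "\<forall>k\<in>{1..n}. 0 < degree E k \<and> real (degree E k) \<le> M"
  shows "opnorm n (commutator n D (diagm (\<lambda>k. a k / of_real M)))
    \<le> opnorm n (commutator n (deg_normalize E D) (diagm a))"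
proof (rule opnorm_least)
  let ?Q = "commutator n (deg_normalize E D) (diagm a)"
  have deg_pos: "\<forall>k\<in>{1..n}. 0 < degree E k" using deg by blast
  fix x assume "vnorm n x \<le> 1"
  define y where "y l = of_real (sqrt (degree E l)) * x l" for l
  have "vnorm n (mvec n (commutator n D (diagm (\<lambda>k. a k / of_real M))) x)
      \<le> sqrt M / M * vnorm n (mvec n ?Q y)"
  proof (rule vnorm_le_pointwise)
    fix k assume k: "k \<in> {1..n}"
    have "cmod (of_real (sqrt (degree E k) / M)) \<le> sqrt M / M"
      unfolding norm_of_real using deg k \<open>0 < M\<close> by (simp add: divide_right_mono)
    then show "cmod (mvec n (commutator n D (diagm (\<lambda>k. a k / of_real M))) x k)
        \<le> sqrt M / M * cmod (mvec n ?Q y k)"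
      unfolding y_def mvec_commutator_eq_deg_normalize[OF \<open>0 < M\<close> deg_pos k] norm_mult
      by (rule mult_right_mono) simp
  qed (use \<open>0 < M\<close> in simp)
  also have "\<dots> \<le> sqrt M / M * (opnorm n ?Q * vnorm n y)"
    using \<open>0 < M\<close> by (intro mult_left_mono vnorm_mvec_le_opnorm) simp
  also have "\<dots> \<le> sqrt M / M * (opnorm n ?Q * (sqrt M * vnorm n x))"
  proof (intro mult_left_mono vnorm_le_pointwise)
    show "cmod (y k) \<le> sqrt M * cmod (x k)" if "k \<in> {1..n}" for k
      using deg that unfolding y_def norm_mult by (simp add: mult_right_mono)
  qed (use \<open>0 < M\<close> opnorm_nonneg in simp_all)
  also have "\<dots> = opnorm n ?Q * vnorm n x"
    using \<open>0 < M\<close> by (simp add: field_simps)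
  also have "\<dots> \<le> opnorm n ?Q"
    using \<open>vnorm n x \<le> 1\<close> opnorm_nonneg vnorm_nonneg by (simp add: mult_left_le)
  finally show "vnorm n (mvec n (commutator n D (diagm (\<lambda>k. a k / of_real M))) x) \<le> opnorm n ?Q" .
qed

lemma nc_dist_deg_normalize_le:
  assumes "0 < M" and "\<forall>k\<in>{1..n}. 0 < degree E k \<and> real (degree E k) \<le> M"
  shows "nc_dist n (deg_normalize E D) i j \<le> ereal M * nc_dist n D i j"
  unfolding nc_dist_def[of n "deg_normalize E D"]
proof (rule SUP_least)
  fix a assume "a \<in> {a. opnorm n (commutator n (deg_normalize E D) (diagm a)) \<le> 1}"
  then have "opnorm n (commutator n D (diagm (\<lambda>k. a k / of_real M))) \<le> 1"
    using opnorm_commutator_le_deg_normalize[OF assms] by (auto intro: order_trans)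
  then have "ereal M * ereal (cmod (a i / of_real M - a j / of_real M)) \<le> ereal M * nc_dist n D i j"
    using \<open>0 < M\<close> by (intro ereal_mult_left_mono nc_dist_lower_bound) simp_all
  moreover have "cmod (a i - a j) = M * cmod (a i / of_real M - a j / of_real M)"
    using \<open>0 < M\<close> by (simp add: diff_divide_distrib[symmetric] norm_divide)
  ultimately show "ereal (cmod (a i - a j)) \<le> ereal M * nc_dist n D i j" by simp
qed

theorem mainTheorem1:
  fixes n :: nat and E :: "nat set set" and D :: "nat \<Rightarrow> nat \<Rightarrow> complex"
  assumes "n \<ge> 2"
    and "simple_graph n E"
    and "connected_graph n E"
    and "\<forall>i\<in>{1..n}. \<forall>j\<in>{1..n}. D j i = cnj (D i j)"
    and "\<forall>i\<in>{1..n}. \<forall>j\<in>{1..n}. i \<noteq> j \<and> {i, j} \<notin> E \<longrightarrow> D i j = 0"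
    and "i \<in> {1..n}" and "j \<in> {1..n}"
  shows "geod_dist E D i j \<le> nc_dist n (deg_normalize E D) i j
       \<and> nc_dist n (deg_normalize E D) i j \<le> ereal (real (max_degree n E)) * nc_dist n D i j"
proof
  have deg_pos: "\<forall>k\<in>{1..n}. 0 < degree E k"
    using degree_pos[OF assms(1-3)] by blast
  then show "geod_dist E D i j \<le> nc_dist n (deg_normalize E D) i j"
    using geod_dist_le_nc_dist_deg_normalize[OF assms(2) _ assms(4,5)] by blast
  have deg_le: "\<forall>k\<in>{1..n}. 0 < degree E k \<and> real (degree E k) \<le> real (max_degree n E)"
    using deg_pos by (simp add: max_degree_def)
  moreover have "0 < real (max_degree n E)"
    using deg_le assms(1) by force
  ultimately show "nc_dist n (deg_normalize E D) i j \<le> ereal (real (max_degree n E)) * nc_dist n D i j"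
    by (intro nc_dist_deg_normalize_le)
qed

end
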